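(* Let $n\ge1$, $k\ge1$, and let $D_{n,k}:B_{n+k}\to B_n$ be the homomorphism of binary De Bruijn digraphs induced by a Boolean function $d_k(x_1,\ldots,x_{k+1})$. Then $D_{n,k}$ has property (D) if and only if $$d_k(x_1,\ldots,x_{k+1})=x_1+h(x_2,\ldots,x_k)+x_{k+1}\pmod 2$$ for some Boolean function $h$ of the $k-1$ variables $x_2,\ldots,x_k$ (a constant when $k=1$).
   Context: $B_m=B_m(2)$ is the binary De Bruijn digraph with vertex set $\{0,1\}^m$ and an edge from $(x_1,\ldots,x_m)$ to $(y_1,\ldots,y_m)$ iff $y_i=x_{i+1}$ for $i=1,\ldots,m-1$. The homomorphism induced by $d_k$ is $D_{n,k}(x_1,\ldots,x_{n+k})=(d_k(x_1,\ldots,x_{k+1}),\ldots,d_k(x_n,\ldots,x_{n+k}))$. A cycle of length $l$ in $B_n$ is a cyclic sequence $[c_1,\ldots,c_l]$ with vertices the windows $(c_j,\ldots,c_{j+n-1})$, indices mod $l$; it is vertex-disjoint if these windows are distinct. Property (D): for every vertex-disjoint cycle $[c_1,\ldots,c_l]$ in $B_n$ and every $w\in\{0,1\}^k$ there is exactly one sequence $(x_1,\ldots,x_{k+l+n-1})$ with $(x_1,\ldots,x_k)=w$ and $d_k(x_j,\ldots,x_{j+k})=c_j$ (index of $c$ mod $l$) for $j=1,\ldots,l+n-1$; and over all $2^k$ choices of $w$ the $2^k l$ words $(x_j,\ldots,x_{j+n+k-1})$, $j=1,\ldots,l$, are pairwise distinct. *)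

theory Defs
  imports Main
begin

(* Binary digits are represented by bool (False = 0, True = 1); addition mod 2 is (\<noteq>).
   Words / sequences are bool lists, 0-indexed.
   A Boolean function d_k of k+1 variables is d :: bool list \<Rightarrow> bool, applied to lists of length k+1. *)

definition cyc_window :: "nat \<Rightarrow> bool list \<Rightarrow> nat \<Rightarrow> bool list" where
  "cyc_window n c j = map (\<lambda>i. c ! ((j + i) mod length c)) [0..<n]"

definition vdisj_cycle :: "nat \<Rightarrow> bool list \<Rightarrow> bool" where
  "vdisj_cycle n c \<longleftrightarrow> length c \<ge> 1 \<and> inj_on (cyc_window n c) {0..<length c}"

definition cyc_lift :: "nat \<Rightarrow> nat \<Rightarrow> (bool list \<Rightarrow> bool) \<Rightarrow> bool list \<Rightarrow> bool list \<Rightarrow> bool list \<Rightarrow> bool" where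
  "cyc_lift n k d c w x \<longleftrightarrow>
     length x = k + length c + n - 1 \<and> take k x = w \<and>
     (\<forall>j < length c + n - 1. d (take (k + 1) (drop j x)) = c ! (j mod length c))"

definition propD :: "nat \<Rightarrow> nat \<Rightarrow> (bool list \<Rightarrow> bool) \<Rightarrow> bool" where
  "propD n k d \<longleftrightarrow>
     (\<forall>c. vdisj_cycle n c \<longrightarrow>
        (\<forall>w. length w = k \<longrightarrow> (\<exists>!x. cyc_lift n k d c w x)) \<and>
        (\<forall>w w' x x' j j'. length w = k \<and> length w' = k \<and>
            cyc_lift n k d c w x \<and> cyc_lift n k d c w' x' \<and>
            j < length c \<and> j' < length c \<and>
            take (n + k) (drop j x) = take (n + k) (drop j' x') \<longrightarrow> w = w' \<and> j = j'))"

end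

theory Submission
  imports Defs
begin

(* A Boolean function d of k+1 variables is right-permutive if its last
   argument is determined by its value and the first k arguments, and left-permutive
   if its first argument is determined by its value and the last k arguments.
   (1) For k \<ge> 1, d is both left- and right-permutive iff it has the normal form
       x_1 + h(x_2,...,x_k) + x_{k+1}.
   (2) Right-permutivity makes lifts of a cycle exist (choose each next letter greedily)
       and propagate agreement forward: two lifts that agree on k consecutive letters
       agree from there on.  Left-permutivity propagates agreement backward.
   (3) Hence left+right-permutivity gives property (D): lifts are unique, and equal
       (n+k)-words of lifts have equal images under D_{n,k}, so the cycle positions agree
       by vertex-disjointness and the two lifts coincide on a k-block, hence everywhere.
   (4) Conversely, property (D) for the 1-cycle [t] forces right-permutivity, and for the
       2-cycle [t, \<not>t] forces left-permutivity: otherwise two different initial words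
       would yield lifts sharing the same (n+k)-word at position 1. *)

definition right_permutive :: "nat \<Rightarrow> (bool list \<Rightarrow> bool) \<Rightarrow> bool" where
  "right_permutive k d \<longleftrightarrow> (\<forall>u b b'. length u = k \<longrightarrow> d (u @ [b]) = d (u @ [b']) \<longrightarrow> b = b')"

definition left_permutive :: "nat \<Rightarrow> (bool list \<Rightarrow> bool) \<Rightarrow> bool" where
  "left_permutive k d \<longleftrightarrow> (\<forall>v b b'. length v = k \<longrightarrow> d (b # v) = d (b' # v) \<longrightarrow> b = b')"

(* Over GF(2), permutivity in a variable means d is affine in it with coefficient 1. *)
lemma right_permutive_flip:
  assumes "right_permutive k d" and "length u = k"
  shows "d (u @ [b]) = (d (u @ [False]) \<noteq> b)"
  using assms unfolding right_permutive_def by (cases b) (metis (full_types))+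

lemma left_permutive_flip:
  assumes "left_permutive k d" and "length v = k"
  shows "d (b # v) = (b \<noteq> d (False # v))"
  using assms unfolding left_permutive_def by (cases b) (metis (full_types))+

lemma permutive_iff_normal_form:
  assumes "k \<ge> 1"
  shows "(right_permutive k d \<and> left_permutive k d) \<longleftrightarrow>
    (\<exists>h :: bool list \<Rightarrow> bool. \<forall>x. length x = k + 1 \<longrightarrow>
        d x = ((x ! 0 \<noteq> h (take (k - 1) (drop 1 x))) \<noteq> x ! k))"
proof
  assume "right_permutive k d \<and> left_permutive k d"
  then have R: "right_permutive k d" and L: "left_permutive k d" by auto
  define h where "h r = d (False # r @ [False])" for r
  show "\<exists>h. \<forall>x. length x = k + 1 \<longrightarrow> d x = ((x ! 0 \<noteq> h (take (k - 1) (drop 1 x))) \<noteq> x ! k)"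
  proof (intro exI[of _ h] allI impI)
    fix x :: "bool list" assume lx: "length x = k + 1"
    define r where "r = take (k - 1) (drop 1 x)"
    have "length r = k - 1" using lx by (simp add: r_def)
    then have lr: "length (r @ [False]) = k" "length (x ! 0 # r) = k" using assms by auto
    have "take k x = x ! 0 # r"
      using lx assms by (cases x) (auto simp: r_def take_Cons')
    moreover have "take k x @ [x ! k] = x"
      using lx by (simp flip: take_Suc_conv_app_nth)
    ultimately have split: "x = (x ! 0 # r) @ [x ! k]" by simp
    have "d x = (d ((x ! 0 # r) @ [False]) \<noteq> x ! k)"
      by (subst split) (rule right_permutive_flip[OF R lr(2)])
    also have "d ((x ! 0 # r) @ [False]) = (x ! 0 \<noteq> h r)"
      using left_permutive_flip[OF L lr(1), of "x ! 0"] by (simp add: h_def)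
    finally show "d x = ((x ! 0 \<noteq> h (take (k - 1) (drop 1 x))) \<noteq> x ! k)"
      by (simp add: r_def)
  qed
next
  assume "\<exists>h. \<forall>x. length x = k + 1 \<longrightarrow> d x = ((x ! 0 \<noteq> h (take (k - 1) (drop 1 x))) \<noteq> x ! k)"
  then obtain h where H: "\<And>x. length x = k + 1 \<Longrightarrow>
      d x = ((x ! 0 \<noteq> h (take (k - 1) (drop 1 x))) \<noteq> x ! k)" by blast
  have "right_permutive k d"
    unfolding right_permutive_def
  proof (intro allI impI)
    fix u :: "bool list" and b b' assume u: "length u = k" and e: "d (u @ [b]) = d (u @ [b'])"
    have "d (u @ [c]) = ((u ! 0 \<noteq> h (take (k - 1) (drop 1 u))) \<noteq> c)" for c
      using H[of "u @ [c]"] assms u by (simp add: nth_append)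
    then show "b = b'" using e by (cases b; cases b') auto
  qed
  moreover have "left_permutive k d"
    unfolding left_permutive_def
  proof (intro allI impI)
    fix v :: "bool list" and b b' assume v: "length v = k" and e: "d (b # v) = d (b' # v)"
    have "d (c # v) = ((c \<noteq> h (take (k - 1) v)) \<noteq> v ! (k - 1))" for c
      using H[of "c # v"] assms v by simp
    then show "b = b'" using e by (cases b; cases b') auto
  qed
  ultimately show "right_permutive k d \<and> left_permutive k d" ..
qed

lemma cyc_lift_window:
  "cyc_lift n k d c w x \<Longrightarrow> j < length c + n - 1 \<Longrightarrow> d (take (k + 1) (drop j x)) = c ! (j mod length c)"
  by (simp add: cyc_lift_def)

lemma window_snoc: "j + k < length xs \<Longrightarrow> take (k + 1) (drop j xs) = take k (drop j xs) @ [xs ! (j + k)]"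
  by (simp add: take_Suc_conv_app_nth add.commute)

lemma window_cons: "j < length xs \<Longrightarrow> take (k + 1) (drop j xs) = xs ! j # take k (drop (Suc j) xs)"
  by (subst Cons_nth_drop_Suc[symmetric]) auto

lemma take_drop_eq_iff:
  assumes "length xs = length ys" and "a + m \<le> length xs"
  shows "take m (drop a xs) = take m (drop a ys) \<longleftrightarrow> (\<forall>p\<in>{a..<a + m}. xs ! p = ys ! p)"
proof -
  have "take m (drop a xs) = take m (drop a ys) \<longleftrightarrow> (\<forall>i<m. xs ! (a + i) = ys ! (a + i))"
    using assms by (simp add: list_eq_iff_nth_eq)
  also have "\<dots> \<longleftrightarrow> (\<forall>p\<in>{a..<a + m}. xs ! p = ys ! p)"
    by (auto, metis le_add_diff_inverse add_less_cancel_left)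
  finally show ?thesis .
qed

lemma cyc_lift_length_eq:
  "cyc_lift n k d c w x \<Longrightarrow> cyc_lift n k d c w' x' \<Longrightarrow> length x' = length x"
  by (simp add: cyc_lift_def)

lemma lifts_agree_forward:
  assumes R: "right_permutive k d"
    and L: "cyc_lift n k d c w x" and L': "cyc_lift n k d c w' x'"
    and block: "\<forall>p\<in>{a..<a + k}. x ! p = x' ! p"
  shows "a \<le> p \<Longrightarrow> p < length x \<Longrightarrow> x ! p = x' ! p"
proof (induction p rule: less_induct)
  case (less p)
  show ?case
  proof (cases "p < a + k")
    case True
    then show ?thesis using less.prems block by auto
  next
    case False
    define j where "j = p - k"
    have p: "p = j + k" and a: "a \<le> j" using False by (auto simp: j_def)
    have len: "length x' = length x" using cyc_lift_length_eq[OF L L'] .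
    have j: "j < length c + n - 1" using less.prems p L by (simp add: cyc_lift_def)
    have "take k (drop j x) = take k (drop j x')"
      using len less.prems p a less.IH by (subst take_drop_eq_iff) auto
    then have "d (take k (drop j x) @ [x ! p]) = d (take k (drop j x) @ [x' ! p])"
      using cyc_lift_window[OF L j] cyc_lift_window[OF L' j] window_snoc[of j k x] window_snoc[of j k x']
        less.prems p len by simp
    moreover have "length (take k (drop j x)) = k" using less.prems p by simp
    ultimately show ?thesis using R p unfolding right_permutive_def by blast
  qed
qed

lemma lifts_agree_backward:
  assumes Lp: "left_permutive k d"
    and L: "cyc_lift n k d c w x" and L': "cyc_lift n k d c w' x'"
    and a: "a + k \<le> length x" and block: "\<forall>p\<in>{a..<a + k}. x ! p = x' ! p"
  shows "\<forall>p\<in>{0..<k}. x ! p = x' ! p"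
proof -
  have len: "length x' = length x" using cyc_lift_length_eq[OF L L'] .
  have "\<forall>p\<in>{i..<i + k}. x ! p = x' ! p" if "i \<le> a" for i
    using that
  proof (induction i rule: inc_induct)
    case base
    show ?case using block .
  next
    case (step i)
    have i: "i < length c + n - 1" using step.hyps a L by (simp add: cyc_lift_def)
    have tail: "take k (drop (Suc i) x) = take k (drop (Suc i) x')"
      using step.IH step.hyps a len by (subst take_drop_eq_iff) auto
    have "length (take k (drop (Suc i) x)) = k" using step.hyps a by simp
    moreover have "d (x ! i # take k (drop (Suc i) x)) = d (x' ! i # take k (drop (Suc i) x))"
      using cyc_lift_window[OF L i] cyc_lift_window[OF L' i] window_cons[of i x k] window_cons[of i x' k]
        tail step.hyps a len by simp
    ultimately have xi: "x ! i = x' ! i"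
      by (rule Lp[unfolded left_permutive_def, rule_format])
    show ?case
    proof
      fix p assume "p \<in> {i..<i + k}"
      then consider "p = i" | "p \<in> {Suc i..<Suc i + k}" by fastforce
      then show "x ! p = x' ! p" using xi step.IH by cases auto
    qed
  qed
  from this[of 0] show ?thesis by simp
qed

lemma lift_unique:
  assumes R: "right_permutive k d" and n: "n \<ge> 1"
    and L: "cyc_lift n k d c w x" and L': "cyc_lift n k d c w x'"
  shows "x' = x"
proof -
  have len: "length x' = length x" using cyc_lift_length_eq[OF L L'] .
  have "take k (drop 0 x) = take k (drop 0 x')" using L L' by (simp add: cyc_lift_def)
  then have "\<forall>p\<in>{0..<0 + k}. x ! p = x' ! p"
    using len L n by (subst (asm) take_drop_eq_iff) (auto simp: cyc_lift_def)
  from lifts_agree_forward[OF R L L' this] have "x ! p = x' ! p" if "p < length x" for p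
    using that by simp
  then show ?thesis using len by (intro nth_equalityI) auto
qed

(* The greedy lift: each new letter is chosen so that the newest window has value t m. *)
primrec greedy_lift :: "(bool list \<Rightarrow> bool) \<Rightarrow> (nat \<Rightarrow> bool) \<Rightarrow> bool list \<Rightarrow> nat \<Rightarrow> bool list" where
  "greedy_lift d t w 0 = w"
| "greedy_lift d t w (Suc m) =
     greedy_lift d t w m @ [d (drop m (greedy_lift d t w m) @ [False]) \<noteq> t m]"

lemma greedy_lift_length: "length (greedy_lift d t w m) = length w + m"
  by (induction m) auto

lemma greedy_lift_take: "take (length w) (greedy_lift d t w m) = w"
  by (induction m) (auto simp: greedy_lift_length)

lemma greedy_lift_windows:
  assumes R: "right_permutive k d" and w: "length w = k"
  shows "j < m \<Longrightarrow> d (take (k + 1) (drop j (greedy_lift d t w m))) = t j"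
proof (induction m)
  case 0
  then show ?case by simp
next
  case (Suc m)
  let ?g = "greedy_lift d t w m"
  have lg: "length ?g = k + m" using w by (simp add: greedy_lift_length)
  show ?case
  proof (cases "j < m")
    case True
    then have "take (k + 1) (drop j (greedy_lift d t w (Suc m))) = take (k + 1) (drop j ?g)"
      using lg by simp
    then show ?thesis using Suc.IH True by (simp only:)
  next
    case False
    then have j: "j = m" using Suc.prems by simp
    let ?b = "d (drop m ?g @ [False]) \<noteq> t m"
    have "length (drop m ?g) = k" using lg by simp
    then have "d (drop m ?g @ [?b]) = t m"
      using right_permutive_flip[OF R, of "drop m ?g" ?b] by (cases "t m") simp_all
    then show ?thesis using j lg by simp
  qed
qed

lemma lift_exists:
  assumes R: "right_permutive k d" and n: "n \<ge> 1" and w: "length w = k"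
  shows "\<exists>x. cyc_lift n k d c w x"
proof -
  define x where "x = greedy_lift d (\<lambda>j. c ! (j mod length c)) w (length c + n - 1)"
  have "cyc_lift n k d c w x"
    unfolding cyc_lift_def
    using n w greedy_lift_take greedy_lift_windows[OF R w] by (auto simp: x_def greedy_lift_length)
  then show ?thesis ..
qed

definition D_map :: "nat \<Rightarrow> nat \<Rightarrow> (bool list \<Rightarrow> bool) \<Rightarrow> bool list \<Rightarrow> bool list" where
  "D_map n k d y = map (\<lambda>i. d (take (k + 1) (drop i y))) [0..<n]"

lemma lift_window_image:
  assumes L: "cyc_lift n k d c w x" and j: "j < length c"
  shows "D_map n k d (take (n + k) (drop j x)) = cyc_window n c j"
proof (rule nth_equalityI)
  show "length (D_map n k d (take (n + k) (drop j x))) = length (cyc_window n c j)"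
    by (simp add: D_map_def cyc_window_def)
next
  fix i assume "i < length (D_map n k d (take (n + k) (drop j x)))"
  then have i: "i < n" by (simp add: D_map_def)
  have "take (k + 1) (drop i (take (n + k) (drop j x))) = take (k + 1) (drop (j + i) x)"
    using i by (simp add: drop_take min_def add.commute)
  moreover have "j + i < length c + n - 1" using i j by arith
  ultimately show "D_map n k d (take (n + k) (drop j x)) ! i = cyc_window n c j ! i"
    using i cyc_lift_window[OF L] by (simp add: D_map_def cyc_window_def)
qed

lemma propD_if_permutive:
  assumes R: "right_permutive k d" and Lp: "left_permutive k d" and n: "n \<ge> 1"
  shows "propD n k d"
  unfolding propD_def
proof (intro allI impI conjI)
  fix c assume vc: "vdisj_cycle n c"
  show "\<exists>!x. cyc_lift n k d c w x" if "length w = k" for w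
    using lift_exists[OF R n that] lift_unique[OF R n] by blast
  fix w w' x x' j j'
  assume "length w = k \<and> length w' = k \<and> cyc_lift n k d c w x \<and> cyc_lift n k d c w' x' \<and>
    j < length c \<and> j' < length c \<and> take (n + k) (drop j x) = take (n + k) (drop j' x')"
  then have L: "cyc_lift n k d c w x" and L': "cyc_lift n k d c w' x'"
    and j: "j < length c" and j': "j' < length c"
    and E: "take (n + k) (drop j x) = take (n + k) (drop j' x')" by auto
  have "cyc_window n c j = cyc_window n c j'"
    using lift_window_image[OF L j] lift_window_image[OF L' j'] E by simp
  then show jj: "j = j'" using vc j j' unfolding vdisj_cycle_def inj_on_def by auto
  have len: "length x' = length x" using cyc_lift_length_eq[OF L L'] .
  have fits: "j + (n + k) \<le> length x" using L j by (simp add: cyc_lift_def)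
  have "\<forall>p\<in>{j..<j + k}. x ! p = x' ! p"
    using E jj take_drop_eq_iff[OF len[symmetric] fits] by auto
  then have "\<forall>p\<in>{0..<k}. x ! p = x' ! p"
    using lifts_agree_backward[OF Lp L L', of j] fits by simp
  then have "take k x = take k x'"
    using take_drop_eq_iff[OF len[symmetric], of 0 k] fits by simp
  then show "w = w'" using L L' by (simp add: cyc_lift_def)
qed

lemma propD_lift_exists:
  assumes "propD n k d" and "vdisj_cycle n c" and "length w = k"
  shows "\<exists>x. cyc_lift n k d c w x"
  using conjunct1[OF assms(1)[unfolded propD_def, rule_format, OF assms(2)], rule_format, OF assms(3)]
  by (rule ex1_implies_ex)

lemma propD_lifts_distinct:
  assumes "propD n k d" and "vdisj_cycle n c" and "length w = k" and "length w' = k"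
    and "cyc_lift n k d c w x" and "cyc_lift n k d c w' x'"
    and "j < length c" and "j' < length c"
    and "take (n + k) (drop j x) = take (n + k) (drop j' x')"
  shows "w = w'"
proof -
  have "\<forall>w w' x x' j j'. length w = k \<and> length w' = k \<and>
      cyc_lift n k d c w x \<and> cyc_lift n k d c w' x' \<and> j < length c \<and> j' < length c \<and>
      take (n + k) (drop j x) = take (n + k) (drop j' x') \<longrightarrow> w = w' \<and> j = j'"
    using assms(1,2) unfolding propD_def by blast
  then show ?thesis using assms(3-) by blast
qed

lemma lift_first_letter:
  assumes L: "cyc_lift n k d c w x" and n: "n \<ge> 1" and c: "c \<noteq> []"
  shows "take (k + 1) x = w @ [x ! k]" and "d (w @ [x ! k]) = c ! 0"
proof -
  have lc: "length c \<ge> 1" using c by (cases c) auto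
  have "k < length x" and "take k x = w"
    using L n lc by (auto simp: cyc_lift_def)
  then show first: "take (k + 1) x = w @ [x ! k]" using window_snoc[of 0 k x] by simp
  have "0 < length c + n - 1" using n lc by simp
  then show "d (w @ [x ! k]) = c ! 0"
    using cyc_lift_window[OF L] first by fastforce
qed

(* Step (4a): lifting the 1-cycle [t] from every word forces right-permutivity. *)
lemma right_permutive_if_propD:
  assumes P: "propD n k d" and n: "n \<ge> 1"
  shows "right_permutive k d"
proof -
  have attained: "\<exists>b. d (u @ [b]) = t" if u: "length u = k" for u t
  proof -
    have "vdisj_cycle n [t]" by (simp add: vdisj_cycle_def)
    then obtain x where "cyc_lift n k d [t] u x" using propD_lift_exists[OF P _ u] by blast
    from lift_first_letter(2)[OF this n] show ?thesis by auto
  qed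
  show ?thesis
    unfolding right_permutive_def
  proof (intro allI impI)
    fix u :: "bool list" and b b' assume u: "length u = k" and e: "d (u @ [b]) = d (u @ [b'])"
    obtain b'' where "d (u @ [b'']) = (\<not> d (u @ [b]))" using attained[OF u] by blast
    then show "b = b'" using e by (cases b; cases b'; cases b'') auto
  qed
qed

lemma vdisj_cycle_alternating: "n \<ge> 1 \<Longrightarrow> vdisj_cycle n [t, \<not> t]"
proof -
  assume n: "n \<ge> 1"
  have "cyc_window n [t, \<not> t] 0 ! 0 \<noteq> cyc_window n [t, \<not> t] 1 ! 0"
    using n by (simp add: cyc_window_def)
  then have "cyc_window n [t, \<not> t] 0 \<noteq> cyc_window n [t, \<not> t] 1" by auto
  then show ?thesis unfolding vdisj_cycle_def inj_on_def by (auto simp: less_Suc_eq)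
qed

(* Step (4b): if d (True # v) = d (False # v), then for the 2-cycle [t, \<not>t] the lifts from
   True # butlast v and False # butlast v both continue with last v, hence agree from
   position 1 on, contradicting the distinctness part of (D). *)
lemma left_permutive_if_propD:
  assumes P: "propD n k d" and n: "n \<ge> 1" and k: "k \<ge> 1"
  shows "left_permutive k d"
proof -
  have R: "right_permutive k d" using right_permutive_if_propD[OF P n] .
  have flips: "d (True # v) \<noteq> d (False # v)" if v: "length v = k" for v
  proof
    assume e: "d (True # v) = d (False # v)"
    define c where "c = [d (True # v), \<not> d (True # v)]"
    have vc: "vdisj_cycle n c" using vdisj_cycle_alternating[OF n] by (simp add: c_def)
    have snoc: "butlast v @ [last v] = v" using v k by (intro append_butlast_last_id) auto
    have w: "length (b # butlast v) = k" for b using v k by simp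
    have initial_word: "take (k + 1) x = b # v"
      if L: "cyc_lift n k d c (b # butlast v) x" and tb: "d (b # v) = c ! 0" for b x
    proof -
      have "d ((b # butlast v) @ [x ! k]) = d ((b # butlast v) @ [last v])"
        using lift_first_letter(2)[OF L n] tb snoc by (simp add: c_def)
      then have "x ! k = last v"
        by (rule R[unfolded right_permutive_def, rule_format, OF w])
      then show ?thesis using lift_first_letter(1)[OF L n] snoc by (simp add: c_def)
    qed
    obtain x where L: "cyc_lift n k d c (True # butlast v) x"
      using propD_lift_exists[OF P vc w] by blast
    obtain x' where L': "cyc_lift n k d c (False # butlast v) x'"
      using propD_lift_exists[OF P vc w] by blast
    have tx: "take (k + 1) x = True # v" using initial_word[OF L] by (simp add: c_def)
    have tx': "take (k + 1) x' = False # v" using initial_word[OF L'] e by (simp add: c_def)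
    have "\<forall>p\<in>{1..<1 + k}. x ! p = x' ! p"
    proof
      fix p assume "p \<in> {1..<1 + k}"
      then have "p < k + 1" "p \<ge> 1" by auto
      then show "x ! p = x' ! p"
        using arg_cong[OF tx, of "\<lambda>ys. ys ! p"] arg_cong[OF tx', of "\<lambda>ys. ys ! p"] by simp
    qed
    from lifts_agree_forward[OF R L L' this] have "x ! p = x' ! p" if "1 \<le> p" "p < length x" for p
      using that by simp
    then have "take (n + k) (drop 1 x) = take (n + k) (drop 1 x')"
      using cyc_lift_length_eq[OF L L'] by (intro nth_equalityI) auto
    then have "True # butlast v = False # butlast v"
      using propD_lifts_distinct[OF P vc w w L L', of 1 1] by (simp add: c_def)
    then show False by simp
  qed
  show ?thesis
    unfolding left_permutive_def
  proof (intro allI impI)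
    fix v :: "bool list" and b b' assume "length v = k" and "d (b # v) = d (b' # v)"
    then show "b = b'" using flips by (cases b; cases b') auto
  qed
qed

theorem mainTheorem4:
  fixes n k :: nat and d :: "bool list \<Rightarrow> bool"
  assumes "n \<ge> 1" and "k \<ge> 1"
  shows "propD n k d \<longleftrightarrow>
    (\<exists>h :: bool list \<Rightarrow> bool. \<forall>x. length x = k + 1 \<longrightarrow>
        d x = ((x ! 0 \<noteq> h (take (k - 1) (drop 1 x))) \<noteq> x ! k))"
proof -
  have "propD n k d \<longleftrightarrow> right_permutive k d \<and> left_permutive k d"
  proof
    assume P: "propD n k d"
    show "right_permutive k d \<and> left_permutive k d"
      using right_permutive_if_propD[OF P assms(1)] left_permutive_if_propD[OF P assms] ..
  next
    assume "right_permutive k d \<and> left_permutive k d"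
    then show "propD n k d" using propD_if_permutive assms(1) by blast
  qed
  also have "\<dots> \<longleftrightarrow> (\<exists>h :: bool list \<Rightarrow> bool. \<forall>x. length x = k + 1 \<longrightarrow>
        d x = ((x ! 0 \<noteq> h (take (k - 1) (drop 1 x))) \<noteq> x ! k))"
    using permutive_iff_normal_form[OF assms(2)] .
  finally show ?thesis .
qed

end
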